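(* Let $x\in A$ with $x>1$, and let $y$ be the largest element of $A$ that is less than $x$. Let $n\ge 1$, let $P_x$ be the position of $\mathrm{AGG}(n,A)$ with one cell containing a tile of value $x$ and $n-1$ empty cells, and define $P_y$ similarly. Then $P_x$ is reachable in $\mathrm{AGG}(n,A)$ if and only if both of the following hold: (1) $P_y$ is reachable in $\mathrm{AGG}(n,A)$; (2) some position of total value exactly $x-y$ is reachable in $\mathrm{AGG}(n-1,A)$.
   Context: Let $A$ be a set of positive integers with $1\in A$ (the allowed tile values). For an integer $n\ge 0$, the abstract generalized 2048 game $\mathrm{AGG}(n,A)$ is played on $n$ indistinguishable cells. A position assigns to each cell either nothing (the cell is empty) or a tile carrying a value in $A$. The initial position has all cells empty. A step, which can be performed from any position having at least one empty cell, consists of: (i) placing a new tile of value $1$ into a chosen empty cell; then (ii) optionally choosing any collection of pairwise disjoint sets of nonempty cells such that the sum of the tile values in each chosen set belongs to $A$, and merging each chosen set into a single tile, whose value is that sum, placed in one cell of the set, the other cells of the set becoming empty. The game ends when, after a step, all cells are nonempty (no further step is then possible). A position is reachable if it can be obtained from the initial position by a finite sequence of steps. The total value of a position is the sum of the values of its tiles. ($\mathrm{AGG}(0,A)$ has only the empty position, of total value $0$.) *)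

theory Defs
  imports Main "HOL-Library.Multiset"
begin

text \<open>Cells are indistinguishable, so a position of AGG(n,A) is represented by the
multiset of values of its tiles (the number of empty cells is n minus its size).\<close>

text \<open>One step: place a tile of value 1 into an empty cell (requires size M < n), then
merge pairwise disjoint groups of tiles, each group's value sum lying in A.\<close>
definition agg_step :: "nat \<Rightarrow> nat set \<Rightarrow> nat multiset \<Rightarrow> nat multiset \<Rightarrow> bool" where
  "agg_step n A M M' \<longleftrightarrow>
     size M < n \<and>
     (\<exists>R Gs. M + {#1#} = R + sum_list Gs \<and>
             (\<forall>G\<in>set Gs. G \<noteq> {#} \<and> sum_mset G \<in> A) \<and>
             M' = R + mset (map sum_mset Gs))"

definition agg_reachable :: "nat \<Rightarrow> nat set \<Rightarrow> nat multiset \<Rightarrow> bool" where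
  "agg_reachable n A M \<longleftrightarrow> (agg_step n A)\<^sup>*\<^sup>* {#} M"

end

theory Submission
  imports Defs
begin

text \<open>A step of the game is "add a tile 1, then merge groups", and merging is transitive and
  can be restricted to any part of the result. Hence reachable positions are closed under
  passing to a sub-multiset followed by merges, and every total up to that of a reachable
  position is the total of an earlier position of the same play.

  If x is reachable, some earlier position of total y merges into the single tile y. In the
  position just before the final merge into x, the tile that has absorbed the first placed 1
  can be removed: the other tiles never needed its cell, so they form a position of
  AGG(n-1). Its total is x - a with a \<in> A and a < x, hence a \<le> y, and cutting its play
  short gives total x - y. Conversely, replay the AGG(n-1) play up to the step before total
  x - y beside the tile y, then place a 1 and merge everything into x.\<close>

text \<open>N' arises from N by merging the groups Gs; singleton groups are tiles left untouched,
  so their values need not lie in A.\<close>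
definition agg_merge :: "nat set \<Rightarrow> nat multiset \<Rightarrow> nat multiset \<Rightarrow> bool" where
  "agg_merge A N N' \<longleftrightarrow>
     (\<exists>Gs. N = \<Sum>\<^sub># Gs \<and> (\<forall>G\<in>#Gs. G \<noteq> {#} \<and> (size G = 1 \<or> sum_mset G \<in> A)) \<and>
           N' = image_mset sum_mset Gs)"

lemma sum_mset_Union_mset:
  "sum_mset (\<Sum>\<^sub># Gs) = (\<Sum>G\<in>#Gs. sum_mset G :: 'a::comm_monoid_add)"
  by (induction Gs) auto

lemma image_mset_sum_mset_singletons:
  "\<forall>G\<in>#Gs. size G = 1 \<Longrightarrow> image_mset sum_mset Gs = \<Sum>\<^sub># (Gs :: 'a::comm_monoid_add multiset multiset)"
proof (induction Gs)
  case (add G Gs)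
  then obtain a where "G = {#a#}" by (metis size_1_singleton_mset union_single_eq_member)
  with add show ?case by auto
qed auto

lemma agg_merge_sum_mset: "agg_merge A N N' \<Longrightarrow> sum_mset N' = sum_mset N"
  unfolding agg_merge_def by (auto simp: sum_mset_Union_mset)

lemma agg_merge_refl: "agg_merge A N N"
  unfolding agg_merge_def
  by (rule exI[of _ "image_mset (\<lambda>a. {#a#}) N"]) (auto simp: multiset.map_comp comp_def)

lemma agg_merge_all: "N \<noteq> {#} \<Longrightarrow> sum_mset N \<in> A \<Longrightarrow> agg_merge A N {#sum_mset N#}"
  unfolding agg_merge_def by (rule exI[of _ "{#N#}"]) auto

lemma agg_merge_add: "agg_merge A N N' \<Longrightarrow> agg_merge A (N + M) (N' + M)"
  unfolding agg_merge_def
proof (elim exE conjE)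
  fix Gs assume "N = \<Sum>\<^sub># Gs" "\<forall>G\<in>#Gs. G \<noteq> {#} \<and> (size G = 1 \<or> sum_mset G \<in> A)"
    "N' = image_mset sum_mset Gs"
  then show "\<exists>Gs. N + M = \<Sum>\<^sub># Gs \<and> (\<forall>G\<in>#Gs. G \<noteq> {#} \<and> (size G = 1 \<or> sum_mset G \<in> A)) \<and>
      N' + M = image_mset sum_mset Gs"
    by (intro exI[of _ "Gs + image_mset (\<lambda>a. {#a#}) M"]) (auto simp: multiset.map_comp comp_def)
qed

lemma agg_merge_empty: "agg_merge A {#} N' \<Longrightarrow> N' = {#}"
  unfolding agg_merge_def by (metis Union_mset_empty_conv image_mset_is_empty_iff multiset_nonemptyE)

lemma agg_merge_in_A:
  assumes "agg_merge A N N'" "\<forall>a\<in>#N. a \<in> A" "a \<in># N'"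
  shows "a \<in> A"
proof -
  obtain Gs where Gs: "N = \<Sum>\<^sub># Gs" "\<forall>G\<in>#Gs. G \<noteq> {#} \<and> (size G = 1 \<or> sum_mset G \<in> A)"
    "N' = image_mset sum_mset Gs"
    using assms(1) unfolding agg_merge_def by blast
  then obtain G where G: "G \<in># Gs" "a = sum_mset G" using assms(3) by auto
  show ?thesis
  proof (cases "size G = 1")
    case True
    then obtain b where "G = {#b#}" by (metis size_1_singleton_mset)
    then show ?thesis using G Gs(1) assms(2) by auto
  next
    case False
    then show ?thesis using G Gs(2) by auto
  qed
qed

lemma agg_merge_subset:
  assumes "agg_merge A N N'" "N1' \<subseteq># N'"
  shows "\<exists>N1. N1 \<subseteq># N \<and> agg_merge A N1 N1'"
proof -
  obtain Gs where Gs: "N = \<Sum>\<^sub># Gs" "\<forall>G\<in>#Gs. G \<noteq> {#} \<and> (size G = 1 \<or> sum_mset G \<in> A)"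
    "N' = image_mset sum_mset Gs"
    using assms(1) unfolding agg_merge_def by blast
  have "image_mset sum_mset Gs = N1' + (N' - N1')" using assms(2) Gs(3) by simp
  then obtain B C where BC: "Gs = B + C" "N1' = image_mset sum_mset B"
    by (metis image_mset_eq_plusD)
  have "\<Sum>\<^sub># B \<subseteq># N" using Gs(1) BC(1) by simp
  moreover have "agg_merge A (\<Sum>\<^sub># B) N1'" unfolding agg_merge_def using BC Gs(2) by auto
  ultimately show ?thesis by blast
qed

lemma image_mset_eq_Union_msetD:
  "image_mset f X = \<Sum>\<^sub># Hs \<Longrightarrow> \<exists>Ps. X = \<Sum>\<^sub># Ps \<and> image_mset (image_mset f) Ps = Hs"
proof (induction Hs arbitrary: X)
  case empty
  then show ?case by (intro exI[of _ "{#}"]) auto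
next
  case (add H Hs)
  then have "image_mset f X = H + \<Sum>\<^sub># Hs" by simp
  then obtain B C where BC: "X = B + C" "H = image_mset f B" "\<Sum>\<^sub># Hs = image_mset f C"
    by (metis image_mset_eq_plusD)
  from add.IH[of C] BC(3) obtain Ps where "C = \<Sum>\<^sub># Ps" "image_mset (image_mset f) Ps = Hs"
    by metis
  then show ?case using BC by (intro exI[of _ "add_mset B Ps"]) auto
qed

lemma agg_merge_trans: "agg_merge A N N' \<Longrightarrow> agg_merge A N' N'' \<Longrightarrow> agg_merge A N N''"
proof -
  assume "agg_merge A N N'" "agg_merge A N' N''"
  then obtain Gs Hs where
    Gs: "N = \<Sum>\<^sub># Gs" "\<forall>G\<in>#Gs. G \<noteq> {#} \<and> (size G = 1 \<or> sum_mset G \<in> A)"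
      "N' = image_mset sum_mset Gs" and
    Hs: "N' = \<Sum>\<^sub># Hs" "\<forall>H\<in>#Hs. H \<noteq> {#} \<and> (size H = 1 \<or> sum_mset H \<in> A)"
      "N'' = image_mset sum_mset Hs"
    unfolding agg_merge_def by blast
  obtain Ps where Ps: "Gs = \<Sum>\<^sub># Ps" "image_mset (image_mset sum_mset) Ps = Hs"
    using image_mset_eq_Union_msetD[of sum_mset Gs Hs] Gs(3) Hs(1) by metis
  define Ks where "Ks = image_mset sum_mset Ps"
  have "N = \<Sum>\<^sub># Ks" unfolding Ks_def using Gs(1) Ps(1) sum_mset_Union_mset[of Ps] by simp
  moreover have "N'' = image_mset sum_mset Ks"
    unfolding Ks_def Hs(3) Ps(2)[symmetric] by (simp add: multiset.map_comp comp_def sum_mset_Union_mset)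
  moreover have "K \<noteq> {#} \<and> (size K = 1 \<or> sum_mset K \<in> A)" if "K \<in># Ks" for K
  proof -
    obtain P where P: "P \<in># Ps" "K = \<Sum>\<^sub># P" using \<open>K \<in># Ks\<close> unfolding Ks_def by auto
    have "image_mset sum_mset P \<in># Hs" using P(1) Ps(2) by auto
    then have PH: "P \<noteq> {#}" "size P = 1 \<or> sum_mset (image_mset sum_mset P) \<in> A"
      using Hs(2) by auto
    have PGs: "G \<in># Gs" if "G \<in># P" for G
      using that P(1) Ps(1) by (metis mset_subset_eqD sum_mset.remove mset_subset_eq_add_left)
    obtain G where "G \<in># P" using PH(1) by blast
    then have "G \<noteq> {#}" "G \<subseteq># K" using PGs Gs(2) P(2)
      by (auto, metis sum_mset.remove mset_subset_eq_add_left)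
    then have "K \<noteq> {#}" by auto
    moreover have "size K = 1 \<or> sum_mset K \<in> A"
    proof (cases "size P = 1")
      case True
      then obtain G' where "P = {#G'#}" by (metis size_1_singleton_mset)
      then show ?thesis using P(2) PGs Gs(2) by auto
    next
      case False
      then show ?thesis using PH(2) P(2) sum_mset_Union_mset[of P] by simp
    qed
    ultimately show ?thesis by blast
  qed
  ultimately show ?thesis unfolding agg_merge_def by blast
qed

lemma agg_step_iff: "agg_step n A M M' \<longleftrightarrow> size M < n \<and> agg_merge A (M + {#1#}) M'"
proof
  assume "agg_step n A M M'"
  then obtain R Gs where RGs: "size M < n" "M + {#1#} = R + sum_list Gs"
      "\<forall>G\<in>set Gs. G \<noteq> {#} \<and> sum_mset G \<in> A" "M' = R + mset (map sum_mset Gs)"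
    unfolding agg_step_def by blast
  then have "agg_merge A (M + {#1#}) M'"
    unfolding agg_merge_def
    by (intro exI[of _ "image_mset (\<lambda>a. {#a#}) R + mset Gs"])
       (auto simp: multiset.map_comp comp_def sum_mset_sum_list)
  with RGs(1) show "size M < n \<and> agg_merge A (M + {#1#}) M'" ..
next
  assume "size M < n \<and> agg_merge A (M + {#1#}) M'"
  then obtain Gs where size: "size M < n" and
    Gs: "M + {#1#} = \<Sum>\<^sub># Gs" "\<forall>G\<in>#Gs. G \<noteq> {#} \<and> (size G = 1 \<or> sum_mset G \<in> A)"
      "M' = image_mset sum_mset Gs"
    unfolding agg_merge_def by blast
  define S where "S = filter_mset (\<lambda>G. size G = 1) Gs"
  obtain L where L: "mset L = filter_mset (\<lambda>G. size G \<noteq> 1) Gs" using ex_mset by blast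
  have Gs_split: "Gs = S + mset L" unfolding S_def L by (metis multiset_partition)
  have S: "image_mset sum_mset S = \<Sum>\<^sub># S"
    by (rule image_mset_sum_mset_singletons) (simp add: S_def)
  have "M + {#1#} = \<Sum>\<^sub># S + sum_list L"
    using Gs(1) Gs_split by (simp add: sum_mset_sum_list[symmetric])
  moreover have "\<forall>G\<in>set L. G \<noteq> {#} \<and> sum_mset G \<in> A"
    using Gs(2) by (auto simp flip: set_mset_mset simp: L)
  moreover have "M' = \<Sum>\<^sub># S + mset (map sum_mset L)"
    using Gs(3) Gs_split S by simp
  ultimately show "agg_step n A M M'" unfolding agg_step_def using size by blast
qed

lemma agg_merge_remove_tile:
  assumes "agg_merge A N N'" "c \<in># N"
  shows "\<exists>b\<in>#N'. \<exists>N0. N0 \<subseteq># N - {#c#} \<and> agg_merge A N0 (N' - {#b#})"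
proof -
  obtain Gs where Gs: "N = \<Sum>\<^sub># Gs" "\<forall>G\<in>#Gs. G \<noteq> {#} \<and> (size G = 1 \<or> sum_mset G \<in> A)"
    "N' = image_mset sum_mset Gs"
    using assms(1) unfolding agg_merge_def by blast
  then obtain G where G: "G \<in># Gs" "c \<in># G" using assms(2) by auto
  have "\<Sum>\<^sub># (Gs - {#G#}) = N - G"
    using Gs(1) G(1) by (metis sum_mset.remove add_diff_cancel_left')
  also have "\<dots> \<subseteq># N - {#c#}"
    using G(2) by (metis diff_subset_eq_self subset_mset.add_diff_inverse diff_diff_add single_subset_iff)
  finally have "\<Sum>\<^sub># (Gs - {#G#}) \<subseteq># N - {#c#}" .
  moreover have "agg_merge A (\<Sum>\<^sub># (Gs - {#G#})) (N' - {#sum_mset G#})"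
    unfolding agg_merge_def using Gs G(1)
    by (intro exI[of _ "Gs - {#G#}"]) (auto simp: image_mset_Diff dest: in_diffD)
  moreover have "sum_mset G \<in># N'" using Gs(3) G(1) by simp
  ultimately show ?thesis by blast
qed

lemma agg_reachable_empty: "agg_reachable n A {#}"
  unfolding agg_reachable_def by simp

lemma agg_reachable_step: "agg_reachable n A M \<Longrightarrow> agg_step n A M M' \<Longrightarrow> agg_reachable n A M'"
  unfolding agg_reachable_def by (rule rtranclp.rtrancl_into_rtrancl)

lemma agg_reachable_add_one: "agg_reachable n A M \<Longrightarrow> size M < n \<Longrightarrow> agg_reachable n A (M + {#1#})"
  using agg_reachable_step agg_step_iff agg_merge_refl by blast

lemma agg_reachable_merge_subset:
  "agg_reachable n A M \<Longrightarrow> N \<subseteq># M \<Longrightarrow> agg_merge A N N' \<Longrightarrow> agg_reachable n A N'"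
  unfolding agg_reachable_def
proof (induction M arbitrary: N N' rule: rtranclp_induct)
  case base
  then show ?case using agg_merge_empty by auto
next
  case (step M M')
  then have size: "size M < n" and merge: "agg_merge A (M + {#1#}) M'"
    using agg_step_iff by auto
  obtain N1 where "N1 \<subseteq># M + {#1#}" "agg_merge A N1 N"
    using agg_merge_subset[OF merge step.prems(1)] by blast
  then have N1: "N1 \<subseteq># M + {#1#}" "agg_merge A N1 N'"
    using agg_merge_trans step.prems(2) by blast+
  show ?case
  proof (cases "1 \<in># N1")
    case True
    then have "N1 - {#1#} \<subseteq># M" using N1(1) by (simp add: subset_eq_diff_conv)
    then have "(agg_step n A)\<^sup>*\<^sup>* {#} (N1 - {#1#})" and "size (N1 - {#1#}) < n"
      using step.IH[OF _ agg_merge_refl] size_mset_mono size by (blast, fastforce)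
    moreover have "agg_merge A (N1 - {#1#} + {#1#}) N'" using True N1(2) by simp
    ultimately have "agg_step n A (N1 - {#1#}) N'" unfolding agg_step_iff by blast
    then show ?thesis using \<open>(agg_step n A)\<^sup>*\<^sup>* {#} (N1 - {#1#})\<close> by simp
  next
    case False
    then have "N1 \<subseteq># M" using N1(1)
      by (metis add_mset_add_single diff_single_trivial subset_eq_diff_conv add.commute)
    then show ?thesis using step.IH N1(2) by blast
  qed
qed

lemma agg_reachable_in_A: "agg_reachable n A M \<Longrightarrow> 1 \<in> A \<Longrightarrow> a \<in># M \<Longrightarrow> a \<in> A"
  unfolding agg_reachable_def
proof (induction arbitrary: a rule: rtranclp_induct)
  case (step M M')
  then have "agg_merge A (M + {#1#}) M'" by (simp add: agg_step_iff)
  moreover have "\<forall>b\<in>#M + {#1#}. b \<in> A" using step.IH step.prems(1) by auto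
  ultimately show ?case using agg_merge_in_A step.prems(2) by blast
qed simp

lemma agg_step_sum_mset: "agg_step n A M M' \<Longrightarrow> sum_mset M' = sum_mset M + 1"
  using agg_step_iff agg_merge_sum_mset by fastforce

lemma agg_reachable_sum_mset_le:
  "agg_reachable n A M \<Longrightarrow> k \<le> sum_mset M \<Longrightarrow> \<exists>M'. agg_reachable n A M' \<and> sum_mset M' = k"
  unfolding agg_reachable_def
proof (induction arbitrary: k rule: rtranclp_induct)
  case (step M M')
  then show ?case
    using agg_step_sum_mset[OF step.hyps(2)] rtranclp.rtrancl_into_rtrancl[OF step.hyps]
    by (cases "k = sum_mset M'") auto
qed auto

text \<open>The induction follows the tile that has absorbed the first placed 1; the remaining
  tiles were built without ever using its cell.\<close>
lemma agg_reachable_remove_tile: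
  assumes "agg_reachable n A M" "M \<noteq> {#}"
  shows "\<exists>a\<in>#M. agg_reachable (n - 1) A (M - {#a#})"
  using assms(1)[unfolded agg_reachable_def] assms(2)
proof (induction rule: rtranclp_induct)
  case (step M M')
  then have size: "size M < n" and merge: "agg_merge A (M + {#1#}) M'"
    using agg_step_iff by auto
  obtain c where c: "c \<in># M + {#1#}" "agg_reachable (n - 1) A (M + {#1#} - {#c#})"
  proof (cases "M = {#}")
    case True
    then show ?thesis using that[of 1] agg_reachable_empty by simp
  next
    case False
    then obtain a where a: "a \<in># M" "agg_reachable (n - 1) A (M - {#a#})" using step.IH by blast
    moreover have "size (M - {#a#}) < n - 1"
      using a(1) size False by (simp add: size_Diff_singleton nonempty_has_size)
    ultimately have "agg_reachable (n - 1) A (M - {#a#} + {#1#})"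
      using agg_reachable_add_one by blast
    then show ?thesis using that[of a] a(1) by simp
  qed
  obtain b N0 where "b \<in># M'" "N0 \<subseteq># M + {#1#} - {#c#}" "agg_merge A N0 (M' - {#b#})"
    using agg_merge_remove_tile[OF merge c(1)] by blast
  then show ?case using agg_reachable_merge_subset c(2) by blast
qed simp

lemma agg_reachable_add:
  assumes "agg_reachable m A Q" "agg_reachable n A M" "size M + m \<le> n"
  shows "agg_reachable n A (Q + M)"
  using assms(1)[unfolded agg_reachable_def]
proof (induction rule: rtranclp_induct)
  case base
  then show ?case using assms(2) by simp
next
  case (step Q Q')
  then have "size Q < m" "agg_merge A (Q + {#1#}) Q'" using agg_step_iff by auto
  then have "agg_step n A (Q + M) (Q' + M)"
    using agg_merge_add[of A "Q + {#1#}" Q' M] assms(3) agg_step_iff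
    by (simp add: add.commute add.left_commute)
  then show ?case using step.IH agg_reachable_step by blast
qed

lemma agg_reachable_last_step:
  assumes "agg_reachable n A M" "M \<noteq> {#}"
  obtains Q where "agg_reachable n A Q" "agg_step n A Q M"
  using assms unfolding agg_reachable_def by (metis rtranclp.cases)

lemma agg_reachable_singleton_le:
  assumes "agg_reachable n A {#x#}" "y \<in> A" "0 < y" "y \<le> x"
  shows "agg_reachable n A {#y#}"
proof -
  obtain M where M: "agg_reachable n A M" "sum_mset M = y"
    using agg_reachable_sum_mset_le[OF assms(1)] assms(4) by auto
  moreover have "M \<noteq> {#}" using M(2) assms(3) by auto
  ultimately have "agg_merge A M {#y#}" using agg_merge_all[of M A] assms(2) by simp
  then show ?thesis using agg_reachable_merge_subset[OF M(1)] by blast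
qed

lemma agg_reachable_singleton_split:
  assumes "agg_reachable n A {#x#}" "1 \<in> A" "1 < x"
  shows "\<exists>a\<in>A. a < x \<and> (\<exists>P. agg_reachable (n - 1) A P \<and> sum_mset P = x - a)"
proof -
  obtain Q where Q: "agg_reachable n A Q" "agg_step n A Q {#x#}"
    using agg_reachable_last_step[OF assms(1)] by (metis empty_not_add_mset)
  have reach: "agg_reachable n A (Q + {#1#})"
    using agg_reachable_add_one Q agg_step_iff by blast
  then obtain a where a: "a \<in># Q + {#1#}" "agg_reachable (n - 1) A (Q + {#1#} - {#a#})"
    using agg_reachable_remove_tile[OF reach] by (metis empty_not_add_mset add_mset_add_single)
  have sum_Q: "sum_mset (Q + {#1#}) = x" using agg_step_sum_mset[OF Q(2)] by simp
  define R where "R = Q + {#1#} - {#a#}"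
  have sum_R: "a + sum_mset R = x" unfolding R_def using sum_mset.remove[OF a(1)] sum_Q by simp
  have "a < x"
  proof (cases "a = 1")
    case False
    then have "1 \<in># R" unfolding R_def by (simp add: in_diff_count)
    then show ?thesis using sum_R sum_mset.remove[of 1 R] by simp
  qed (use assms(3) in simp)
  moreover have "a \<in> A" using agg_reachable_in_A reach assms(2) a(1) by blast
  moreover have "sum_mset R = x - a" using sum_R by simp
  ultimately show ?thesis using a(2) unfolding R_def by blast
qed

lemma agg_reachable_singleton_combine:
  assumes "agg_reachable n A {#y#}" "agg_reachable (n - 1) A P" "P \<noteq> {#}" "y + sum_mset P \<in> A"
    "1 \<le> n"
  shows "agg_reachable n A {#y + sum_mset P#}"
proof -
  obtain Q where Q: "agg_reachable (n - 1) A Q" "agg_step (n - 1) A Q P"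
    using agg_reachable_last_step[OF assms(2,3)] by blast
  have "size Q < n - 1" using Q(2) agg_step_iff by blast
  have "agg_reachable n A (Q + {#y#})" using agg_reachable_add[OF Q(1) assms(1)] assms(5) by simp
  moreover have sum_eq: "sum_mset (Q + {#y#} + {#1#}) = y + sum_mset P"
    using agg_step_sum_mset[OF Q(2)] by simp
  have "agg_merge A (Q + {#y#} + {#1#}) {#y + sum_mset P#}"
    unfolding sum_eq[symmetric] by (rule agg_merge_all) (simp, simp only: sum_eq assms(4))
  ultimately show ?thesis using agg_reachable_step agg_step_iff \<open>size Q < n - 1\<close> by fastforce
qed

theorem lemma2:
  fixes A :: "nat set" and x y n :: nat
  assumes "0 \<notin> A" and "1 \<in> A"
    and "x \<in> A" and "x > 1"
    and "y \<in> A" and "y < x" and "\<forall>a\<in>A. a < x \<longrightarrow> a \<le> y"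
    and "n \<ge> 1"
  shows "agg_reachable n A {#x#} \<longleftrightarrow>
           (agg_reachable n A {#y#} \<and>
            (\<exists>P. agg_reachable (n - 1) A P \<and> sum_mset P = x - y))"
proof
  assume x: "agg_reachable n A {#x#}"
  have "0 < y" using assms(2,4,7) by fastforce
  then have "agg_reachable n A {#y#}" using agg_reachable_singleton_le[OF x assms(5)] assms(6) by simp
  moreover obtain a P where "a \<in> A" "a < x" "agg_reachable (n - 1) A P" "sum_mset P = x - a"
    using agg_reachable_singleton_split[OF x assms(2,4)] by blast
  then have "\<exists>P. agg_reachable (n - 1) A P \<and> sum_mset P = x - y"
    using agg_reachable_sum_mset_le[of "n - 1" A P "x - y"] assms(7) by force
  ultimately show "agg_reachable n A {#y#} \<and> (\<exists>P. agg_reachable (n - 1) A P \<and> sum_mset P = x - y)" ..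
next
  assume "agg_reachable n A {#y#} \<and> (\<exists>P. agg_reachable (n - 1) A P \<and> sum_mset P = x - y)"
  then obtain P where "agg_reachable n A {#y#}" "agg_reachable (n - 1) A P" "sum_mset P = x - y"
    by blast
  moreover have "P \<noteq> {#}" and "y + sum_mset P = x" using \<open>sum_mset P = x - y\<close> assms(6) by auto
  ultimately show "agg_reachable n A {#x#}"
    using agg_reachable_singleton_combine[of n A y P] assms(3,8) by simp
qed

end
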